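(* Let $\mathcal{S}=(X,\xrightarrow{\Sigma},\le)$ be a WSTS whose completion $\widehat{\mathcal{S}}$ is deterministic and has strong-strict monotonicity. Let $I\in\mathrm{Idl}(X)$ and $w\in\Sigma^+$ be such that $I\subset w(I)$. Then for every $k\in\mathbb{N}$, $w^k(I)$ and $w^{k+1}(I)$ are defined and $w^k(I)\subset w^{k+1}(I)$.
   Context: A (labeled, ordered) transition system is $\mathcal{S}=(X,\xrightarrow{\Sigma},\le)$: $X$ a set, $\Sigma$ a finite alphabet, relations $\xrightarrow{a}\subseteq X\times X$, $\le$ a quasi-ordering; relations extend to words. $\mathrm{Post}(x,a)=\{y:x\xrightarrow{a}y\}$, extended to sets by union; $\downarrow D=\{x:\exists y\in D,\,x\le y\}$. WSTS: $\le$ a wqo and $x\xrightarrow{a}y$, $x'\ge x$ imply $x'\xrightarrow{w}y'$ for some $w$ and $y'\ge y$. A transition system has strong-strict monotonicity if $x\xrightarrow{a}y$, $x'\ge x$ imply $x'\xrightarrow{a}y'$ for some $y'\ge y$, and $x\xrightarrow{a}y$, $x'>x$ imply $x'\xrightarrow{a}y'$ for some $y'>y$. Deterministic: at most one $a$-successor. Ideals: nonempty downward-closed directed subsets; $\mathrm{Idl}(X)$ their set. Completion $\widehat{\mathcal{S}}=(\mathrm{Idl}(X),\Rightarrow_\Sigma,\subseteq)$: $I\xRightarrow{a}J$ iff $J$ is a $\subseteq$-maximal ideal contained in $\downarrow\mathrm{Post}(I,a)$, extended to words. When deterministic, $w(I)$ denotes the unique $J$ with $I\xRightarrow{w}J$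 if it exists. *)

theory Defs
  imports Main
begin

definition quasi_order :: "('x \<Rightarrow> 'x \<Rightarrow> bool) \<Rightarrow> bool" where
  "quasi_order le \<longleftrightarrow> (\<forall>x. le x x) \<and> (\<forall>x y z. le x y \<longrightarrow> le y z \<longrightarrow> le x z)"

definition wqo :: "('x \<Rightarrow> 'x \<Rightarrow> bool) \<Rightarrow> bool" where
  "wqo le \<longleftrightarrow> quasi_order le \<and> (\<forall>f :: nat \<Rightarrow> 'x. \<exists>i j. i < j \<and> le (f i) (f j))"

fun step_word :: "('a \<Rightarrow> 's \<Rightarrow> 's \<Rightarrow> bool) \<Rightarrow> 'a list \<Rightarrow> 's \<Rightarrow> 's \<Rightarrow> bool" where
  "step_word R [] x y \<longleftrightarrow> x = y"
| "step_word R (a # w) x y \<longleftrightarrow> (\<exists>z. R a x z \<and> step_word R w z y)"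

definition WSTS :: "'a set \<Rightarrow> ('a \<Rightarrow> 'x \<Rightarrow> 'x \<Rightarrow> bool) \<Rightarrow> ('x \<Rightarrow> 'x \<Rightarrow> bool) \<Rightarrow> bool" where
  "WSTS Sig step le \<longleftrightarrow> finite Sig \<and> wqo le \<and>
     (\<forall>a\<in>Sig. \<forall>x y x'. step a x y \<and> le x x' \<longrightarrow>
        (\<exists>w y'. set w \<subseteq> Sig \<and> step_word step w x' y' \<and> le y y'))"

definition Post :: "('a \<Rightarrow> 'x \<Rightarrow> 'x \<Rightarrow> bool) \<Rightarrow> 'x set \<Rightarrow> 'a \<Rightarrow> 'x set" where
  "Post step D a = {y. \<exists>x\<in>D. step a x y}"

definition downclosure :: "('x \<Rightarrow> 'x \<Rightarrow> bool) \<Rightarrow> 'x set \<Rightarrow> 'x set" where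
  "downclosure le D = {x. \<exists>y\<in>D. le x y}"

definition down_closed :: "('x \<Rightarrow> 'x \<Rightarrow> bool) \<Rightarrow> 'x set \<Rightarrow> bool" where
  "down_closed le D \<longleftrightarrow> (\<forall>x y. y \<in> D \<and> le x y \<longrightarrow> x \<in> D)"

definition directed :: "('x \<Rightarrow> 'x \<Rightarrow> bool) \<Rightarrow> 'x set \<Rightarrow> bool" where
  "directed le D \<longleftrightarrow> (\<forall>x\<in>D. \<forall>y\<in>D. \<exists>z\<in>D. le x z \<and> le y z)"

definition ideal :: "('x \<Rightarrow> 'x \<Rightarrow> bool) \<Rightarrow> 'x set \<Rightarrow> bool" where
  "ideal le D \<longleftrightarrow> D \<noteq> {} \<and> down_closed le D \<and> directed le D"

definition cstep :: "('a \<Rightarrow> 'x \<Rightarrow> 'x \<Rightarrow> bool) \<Rightarrow> ('x \<Rightarrow> 'x \<Rightarrow> bool) \<Rightarrow> 'a \<Rightarrow> 'x set \<Rightarrow> 'x set \<Rightarrow> bool" where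
  "cstep step le a I J \<longleftrightarrow> ideal le I \<and> ideal le J \<and>
     J \<subseteq> downclosure le (Post step I a) \<and>
     (\<forall>J'. ideal le J' \<and> J \<subseteq> J' \<and> J' \<subseteq> downclosure le (Post step I a) \<longrightarrow> J' = J)"

definition completion_deterministic :: "'a set \<Rightarrow> ('a \<Rightarrow> 'x \<Rightarrow> 'x \<Rightarrow> bool) \<Rightarrow> ('x \<Rightarrow> 'x \<Rightarrow> bool) \<Rightarrow> bool" where
  "completion_deterministic Sig step le \<longleftrightarrow>
     (\<forall>a\<in>Sig. \<forall>I J J'. cstep step le a I J \<and> cstep step le a I J' \<longrightarrow> J = J')"

definition completion_strong_strict_monotone :: "'a set \<Rightarrow> ('a \<Rightarrow> 'x \<Rightarrow> 'x \<Rightarrow> bool) \<Rightarrow> ('x \<Rightarrow> 'x \<Rightarrow> bool) \<Rightarrow> bool" where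
  "completion_strong_strict_monotone Sig step le \<longleftrightarrow>
     (\<forall>a\<in>Sig. \<forall>I J I'. cstep step le a I J \<and> ideal le I' \<and> I \<subseteq> I' \<longrightarrow>
         (\<exists>J'. cstep step le a I' J' \<and> J \<subseteq> J')) \<and>
     (\<forall>a\<in>Sig. \<forall>I J I'. cstep step le a I J \<and> ideal le I' \<and> I \<subset> I' \<longrightarrow>
         (\<exists>J'. cstep step le a I' J' \<and> J \<subset> J'))"

definition word_pow :: "'a list \<Rightarrow> nat \<Rightarrow> 'a list" where
  "word_pow w k = concat (replicate k w)"

end

theory Submission
  imports Defs
begin

text \<open>Strict monotonicity of the completion lifts from letters to words, so applying w to the
  strict inclusion w^k(I) \<subset> w^(k+1)(I) yields w^(k+1)(I) \<subset> w^(k+2)(I); determinism ensures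
  that the ideal reached from I along w^(k+1) is the one reached from w^k(I) along w.\<close>

lemma step_word_append:
  "step_word R (u @ v) x y \<longleftrightarrow> (\<exists>z. step_word R u x z \<and> step_word R v z y)"
  by (induction u arbitrary: x) auto

lemma word_pow_Suc: "word_pow w (Suc k) = word_pow w k @ w"
  unfolding word_pow_def by (induction k) auto

lemma set_word_pow_subset: "set w \<subseteq> Sig \<Longrightarrow> set (word_pow w k) \<subseteq> Sig"
  unfolding word_pow_def by (induction k) auto

lemma step_word_cstep_ideal:
  "step_word (cstep step le) u I J \<Longrightarrow> ideal le I \<Longrightarrow> ideal le J"
  by (induction u arbitrary: I) (auto simp: cstep_def)

lemma step_word_cstep_deterministic:
  assumes "completion_deterministic Sig step le" and "set u \<subseteq> Sig"
    and "step_word (cstep step le) u I J" and "step_word (cstep step le) u I J'"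
  shows "J = J'"
  using assms(2-)
proof (induction u arbitrary: I)
  case (Cons a u)
  then obtain K K' where "cstep step le a I K" "step_word (cstep step le) u K J"
    and "cstep step le a I K'" "step_word (cstep step le) u K' J'" by auto
  moreover have "K = K'"
    using assms(1) Cons.prems(1) calculation(1,3) unfolding completion_deterministic_def by auto
  ultimately show ?case using Cons by auto
qed simp

lemma cstep_strict_mono:
  assumes "completion_strong_strict_monotone Sig step le" and "a \<in> Sig"
    and "cstep step le a I J" and "ideal le I'" and "I \<subset> I'"
  shows "\<exists>J'. cstep step le a I' J' \<and> J \<subset> J'"
proof -
  have "\<forall>a\<in>Sig. \<forall>I J I'. cstep step le a I J \<and> ideal le I' \<and> I \<subset> I' \<longrightarrow>
      (\<exists>J'. cstep step le a I' J' \<and> J \<subset> J')"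
    using assms(1) unfolding completion_strong_strict_monotone_def by (rule conjunct2)
  then show ?thesis using assms(2-) by blast
qed

lemma step_word_cstep_strict_mono:
  assumes ssm: "completion_strong_strict_monotone Sig step le"
  shows "set u \<subseteq> Sig \<Longrightarrow> step_word (cstep step le) u I J \<Longrightarrow> ideal le I' \<Longrightarrow> I \<subset> I' \<Longrightarrow>
    \<exists>J'. step_word (cstep step le) u I' J' \<and> J \<subset> J'"
proof (induction u arbitrary: I I')
  case Nil
  then show ?case by simp
next
  case (Cons a u)
  from Cons.prems(2) obtain K where K: "cstep step le a I K" "step_word (cstep step le) u K J"
    by auto
  have "a \<in> Sig" "set u \<subseteq> Sig" using Cons.prems(1) by simp_all
  obtain K' where K': "cstep step le a I' K'" "K \<subset> K'"
    using cstep_strict_mono[OF ssm \<open>a \<in> Sig\<close> K(1) Cons.prems(3,4)] by blast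
  have "ideal le K'" using K'(1) unfolding cstep_def by blast
  then obtain J' where "step_word (cstep step le) u K' J'" "J \<subset> J'"
    using Cons.IH[OF \<open>set u \<subseteq> Sig\<close> K(2) _ K'(2)] by blast
  then show ?case using K'(1) by auto
qed

theorem proposition21:
  fixes Sig :: "'a set" and step :: "'a \<Rightarrow> 'x \<Rightarrow> 'x \<Rightarrow> bool" and le :: "'x \<Rightarrow> 'x \<Rightarrow> bool"
    and I :: "'x set" and w :: "'a list"
  assumes "WSTS Sig step le"
    and "completion_deterministic Sig step le"
    and "completion_strong_strict_monotone Sig step le"
    and "ideal le I"
    and "w \<noteq> []" and "set w \<subseteq> Sig"
    and "\<exists>J. step_word (cstep step le) w I J \<and> I \<subset> J"
  shows "\<forall>k::nat. \<exists>J J'. step_word (cstep step le) (word_pow w k) I J \<and>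
                          step_word (cstep step le) (word_pow w (Suc k)) I J' \<and> J \<subset> J'"
proof
  let ?reach = "step_word (cstep step le)"
  fix k show "\<exists>J J'. ?reach (word_pow w k) I J \<and> ?reach (word_pow w (Suc k)) I J' \<and> J \<subset> J'"
  proof (induction k)
    case 0
    then show ?case using assms(7) by (simp add: word_pow_def)
  next
    case (Suc k)
    then obtain J J' where J: "?reach (word_pow w k) I J"
      and J': "?reach (word_pow w (Suc k)) I J'" and "J \<subset> J'" by blast
    from J' obtain K where K: "?reach (word_pow w k) I K" "?reach w K J'"
      unfolding word_pow_Suc step_word_append by blast
    have "K = J"
      using step_word_cstep_deterministic[OF assms(2) set_word_pow_subset[OF assms(6)] K(1) J] .
    with K(2) have "?reach w J J'" by simp
    moreover have "ideal le J'" using step_word_cstep_ideal[OF J' assms(4)] .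
    ultimately obtain J'' where J'': "?reach w J' J''" "J' \<subset> J''"
      using step_word_cstep_strict_mono[OF assms(3,6) _ _ \<open>J \<subset> J'\<close>] by blast
    have "?reach (word_pow w (Suc (Suc k))) I J''"
      unfolding word_pow_Suc[of w "Suc k"] step_word_append using J' J''(1) by blast
    then show ?case using J' J''(2) by blast
  qed
qed

end
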